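(* Let an LTI system be BIBO stable with impulse response $h(t)$ and strictly proper rational transfer function $H(s)=\mathcal L[h(t)]$ of minimal order $m$, with unit DC gain, i.e. $H(0)=\int_0^\infty h(t)dt=1$. Then the system can be represented by a triple $(\Pi,\eta,\alpha)$ with $\Pi\in\mathbb R^{m\times m}$ Hurwitz, $\eta=-\Pi\mathbf 1_m\in\mathbb R^m$ and $\alpha=[1,0,\dots,0]^\top\in\mathbb R^m$, in the sense that $H(s)=\alpha^\top(sI-\Pi)^{-1}\eta$; the impulse response is $h(t)=\alpha^\top\exp(\Pi t)\eta$ and the step response is $\int_0^th(\tau)d\tau=1-\alpha^\top\exp(\Pi t)\mathbf 1_m$ for $t\ge0$.
   Context: $\mathbf 1_m$ denotes the all-ones column vector in $\mathbb R^m$; $\mathcal L$ denotes the Laplace transform. A matrix is Hurwitz if all its eigenvalues have negative real part. *)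

theory Defs
  imports "HOL-Analysis.Analysis" "HOL-Computational_Algebra.Polynomial"
begin

primrec mat_pow :: "'a::comm_ring_1 ^'n^'n \<Rightarrow> nat \<Rightarrow> 'a^'n^'n" where
  "mat_pow A 0 = mat 1"
| "mat_pow A (Suc k) = A ** mat_pow A k"

definition mat_exp :: "real^'n^'n \<Rightarrow> real^'n^'n" where
  "mat_exp A = (\<Sum>k. (1 / fact k) *\<^sub>R mat_pow A k)"

definition cmat :: "real^'n^'m \<Rightarrow> complex^'n^'m" where
  "cmat A = (\<chi> i j. complex_of_real (A $ i $ j))"

definition cvec :: "real^'n \<Rightarrow> complex^'n" where
  "cvec v = (\<chi> i. complex_of_real (v $ i))"

definition is_eigenvalue :: "real^'n^'n \<Rightarrow> complex \<Rightarrow> bool" where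
  "is_eigenvalue A l \<longleftrightarrow> (\<exists>v. v \<noteq> 0 \<and> cmat A *v v = l *s v)"

definition hurwitz :: "real^'n^'n \<Rightarrow> bool" where
  "hurwitz A \<longleftrightarrow> (\<forall>l. is_eigenvalue A l \<longrightarrow> Re l < 0)"

definition ones :: "'a::one^'n" where
  "ones = (\<chi> i. 1)"

definition first_unit :: "real^'n::{finite,wellorder}" where
  "first_unit = axis (LEAST i. True) 1"

definition ratfun :: "real poly \<Rightarrow> real poly \<Rightarrow> complex \<Rightarrow> complex" where
  "ratfun p q s = poly (map_poly complex_of_real p) s / poly (map_poly complex_of_real q) s"

end

(*
  Write H = B/Q with Q monic of degree m, so that H(0) = 1 means B(0) = Q(0).  The observer
  companion matrix C of Q, conjugated by a shear sending the all-ones vector to a vector w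
  with C w = -b (b the coefficient vector of B, the equation C w = -b being solvable exactly
  because B(0) = Q(0)), yields P with input vector -P 1 and output the first coordinate; every
  eigenvalue of P is a root of Q.  Since h is integrable, its Laplace transform B/Q is bounded
  on Re s > 0; as B and Q are coprime, Q has no root with Re s >= 0, so P is Hurwitz.  For
  large real s the Laplace transform of alpha . exp(tP) eta solves the resolvent equation and
  therefore also equals B/Q; Lerch's uniqueness theorem (Weierstrass approximation in the
  variable e^-t) identifies h with it.  The step response follows by integrating
  d/dt exp(tP) = P exp(tP).
*)
theory Submission
  imports Defs "HOL-Computational_Algebra.Polynomial_Factorial" "HOL-Computational_Algebra.Field_as_Ring"
begin

section \<open>A state-space realisation of a strictly proper rational function\<close>

abbreviation first_idx :: "'m::{finite,wellorder}" where
  "first_idx \<equiv> LEAST i. True"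

lemma ones_nth [simp]: "(ones :: 'a::one^'n) $ i = 1"
  by (simp add: ones_def)

lemma cmat_nth [simp]: "cmat X $ i $ j = complex_of_real (X $ i $ j)"
  by (simp add: cmat_def)

lemma cvec_nth [simp]: "cvec v $ i = complex_of_real (v $ i)"
  by (simp add: cvec_def)

lemma cmat_matrix_mult: "cmat (X ** Y) = cmat X ** cmat Y"
  by (simp add: vec_eq_iff matrix_matrix_mult_def)

lemma cmat_mult_cvec: "cmat X *v cvec v = cvec (X *v v)"
  by (simp add: vec_eq_iff matrix_vector_mult_def)

lemma if_zero_mult: "(if P then c else 0) * (x::'a::mult_zero) = (if P then c * x else 0)"
  by simp

lemma of_real_if_zero: "(of_real (if P then c else 0) :: 'a::real_algebra_1) = (if P then of_real c else 0)"
  by simp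

lemma mat_mult_vector: "mat k *v (x :: 'a::comm_ring_1^'n) = k *s x"
  by (simp add: vec_eq_iff matrix_vector_mult_def mat_def if_zero_mult)

lemma matrix_vector_mult_uminus_right: "(M :: 'a::comm_ring_1^'n^'m) *v (- x) = - (M *v x)"
  by (simp add: vec_eq_iff matrix_vector_mult_def sum_negf)

lemma sum_powers_telescope:
  fixes Y :: "nat \<Rightarrow> 'a::comm_ring_1"
  shows "(\<Sum>k<Suc j. s^k * (s * Y k - (if k = 0 then 0 else Y (k-1)))) = s^Suc j * Y j"
  by (induction j) (simp_all add: algebra_simps)

lemma companion_recurrence_imp_poly_eq:
  fixes Y a b :: "nat \<Rightarrow> 'a::comm_ring_1"
  assumes "n > 0"
    and rec: "\<And>k. k < n \<Longrightarrow> s * Y k - (if k = 0 then 0 else Y (k-1)) + a k * Y (n-1) = b k"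
  shows "Y (n-1) * (s^n + (\<Sum>k<n. a k * s^k)) = (\<Sum>k<n. b k * s^k)"
proof -
  have "s^n * Y (n-1) = (\<Sum>k<n. s^k * (s * Y k - (if k = 0 then 0 else Y (k-1))))"
    using sum_powers_telescope[of s Y "n-1"] \<open>n > 0\<close> by simp
  also have "\<dots> = (\<Sum>k<n. s^k * (b k - a k * Y (n-1)))"
    by (intro sum.cong refl) (simp add: rec[symmetric])
  also have "\<dots> = (\<Sum>k<n. b k * s^k) - Y (n-1) * (\<Sum>k<n. a k * s^k)"
    by (simp add: algebra_simps sum_subtractf sum_distrib_left)
  finally show ?thesis by (simp add: algebra_simps)
qed

lemma enumeration_ending_at_first_idx:
  "\<exists>en::nat \<Rightarrow> 'm::{finite,wellorder}. bij_betw en {..<CARD('m)} UNIV \<and> en (CARD('m) - 1) = first_idx"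
proof -
  obtain f :: "nat \<Rightarrow> 'm" where f: "bij_betw f {..<CARD('m)} UNIV"
    using ex_bij_betw_nat_finite[of "UNIV::'m set"] by (auto simp: atLeast0LessThan)
  define sw where "sw = Transposition.transpose (f (CARD('m) - 1)) (first_idx :: 'm)"
  have "bij_betw (sw \<circ> f) {..<CARD('m)} UNIV"
    using bij_betw_trans[OF f, of sw] by (simp add: sw_def)
  moreover have "(sw \<circ> f) (CARD('m) - 1) = first_idx" by (simp add: sw_def)
  ultimately show ?thesis by blast
qed

text \<open>Observer companion form of \<open>s^m + a (m-1) s^(m-1) + \<dots> + a 0\<close> in the coordinates
  \<open>en 0, \<dots>, en (m-1)\<close>, with output coordinate \<open>en (m-1) = first_idx\<close>; \<open>shear\<close> is the
  change of coordinates sending \<open>ones\<close> to \<open>w\<close>.\<close>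
locale companion_realisation =
  fixes en :: "nat \<Rightarrow> 'm::{finite,wellorder}" and a b :: "nat \<Rightarrow> real"
  assumes bij: "bij_betw en {..<CARD('m)} UNIV"
    and en_last: "en (CARD('m) - 1) = first_idx"
    and monic: "a CARD('m) = 1" and strictly_proper: "b CARD('m) = 0"
    and unit_dc_gain: "a 0 = b 0"
begin

definition ix :: "'m \<Rightarrow> nat" where
  "ix = the_inv_into {..<CARD('m)} en"

lemma en_ix [simp]: "en (ix r) = r"
  unfolding ix_def using bij by (simp add: bij_betw_def f_the_inv_into_f)

lemma ix_less [simp]: "ix r < CARD('m)"
  unfolding ix_def using bij
  by (metis UNIV_I bij_betw_def lessThan_iff the_inv_into_into subset_refl)

lemma ix_en [simp]: "k < CARD('m) \<Longrightarrow> ix (en k) = k"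
  unfolding ix_def using bij by (simp add: bij_betw_def the_inv_into_f_f)

lemma ix_first_idx [simp]: "ix first_idx = CARD('m) - 1"
  using en_last ix_en[of "CARD('m) - 1"] by simp

lemma vec_eq_iff_en: "(x::'a^'m::{finite,wellorder}) = y \<longleftrightarrow> (\<forall>k<CARD('m). x $ en k = y $ en k)"
  by (metis en_ix ix_less vec_eq_iff)

lemma ix_eq_iff: "k < CARD('m) \<Longrightarrow> ix r = k \<longleftrightarrow> r = en k"
  by auto

definition comp :: "real^'m::{finite,wellorder}^'m::{finite,wellorder}" where
  "comp = (\<chi> r c. (if 0 < ix r \<and> ix c = ix r - 1 then 1 else 0) - (if c = first_idx then a (ix r) else 0))"

definition numer :: "real^'m::{finite,wellorder}" where
  "numer = (\<chi> r. b (ix r))"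

definition w :: "real^'m::{finite,wellorder}" where
  "w = (\<chi> r. a (Suc (ix r)) - b (Suc (ix r)))"

definition u :: "real^'m::{finite,wellorder}" where
  "u = w - ones"

definition shear :: "real^'m::{finite,wellorder}^'m::{finite,wellorder}" where
  "shear = (\<chi> r c. (if r = c then 1 else 0) + (if c = first_idx then u $ r else 0))"

definition shear_inv :: "real^'m::{finite,wellorder}^'m::{finite,wellorder}" where
  "shear_inv = (\<chi> r c. (if r = c then 1 else 0) - (if c = first_idx then u $ r else 0))"

definition state_matrix :: "real^'m::{finite,wellorder}^'m::{finite,wellorder}" where
  "state_matrix = shear_inv ** comp ** shear"

definition input_vec :: "real^'m::{finite,wellorder}" where
  "input_vec = - (state_matrix *v ones)"

lemma u_first_idx [simp]: "u $ first_idx = 0"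
  using monic strictly_proper by (simp add: u_def w_def)

lemma shear_mult: "shear *v x = x + x $ first_idx *s u"
  by (simp add: vec_eq_iff matrix_vector_mult_def shear_def sum.distrib distrib_right if_zero_mult of_real_if_zero)

lemma shear_inv_mult: "shear_inv *v x = x - x $ first_idx *s u"
  by (simp add: vec_eq_iff matrix_vector_mult_def shear_inv_def sum_subtractf left_diff_distrib if_zero_mult of_real_if_zero)

lemma cmat_shear_mult: "cmat shear *v x = x + x $ first_idx *s cvec u"
  by (simp add: vec_eq_iff matrix_vector_mult_def shear_def sum.distrib distrib_right if_zero_mult of_real_if_zero)

lemma cmat_shear_inv_mult: "cmat shear_inv *v x = x - x $ first_idx *s cvec u"
  by (simp add: vec_eq_iff matrix_vector_mult_def shear_inv_def sum_subtractf left_diff_distrib if_zero_mult of_real_if_zero)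

lemma shear_shear_inv: "shear *v (shear_inv *v x) = x"
  by (simp add: shear_mult shear_inv_mult vec_eq_iff algebra_simps)

lemma cmat_shear_inverse:
  "cmat shear *v (cmat shear_inv *v x) = x" "cmat shear_inv *v (cmat shear *v x) = x"
  by (simp_all add: cmat_shear_mult cmat_shear_inv_mult vec_eq_iff algebra_simps)

lemma cmat_comp_mult:
  assumes "k < CARD('m)"
  shows "(cmat comp *v y) $ en k = (if k = 0 then 0 else y $ en (k-1)) - of_real (a k) * y $ first_idx"
proof -
  have "(cmat comp *v y) $ en k =
      (\<Sum>c\<in>UNIV. if 0 < k \<and> ix c = k - 1 then y $ c else 0) - of_real (a k) * y $ first_idx"
    using assms by (simp add: matrix_vector_mult_def comp_def left_diff_distrib sum_subtractf
        if_zero_mult of_real_if_zero cong: if_cong)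
  also have "(\<Sum>c\<in>UNIV. if 0 < k \<and> ix c = k - 1 then y $ c else 0) = (if k = 0 then 0 else y $ en (k-1))"
    using assms by (auto simp: ix_eq_iff)
  finally show ?thesis .
qed

lemma comp_mult:
  assumes "k < CARD('m)"
  shows "(comp *v y) $ en k = (if k = 0 then 0 else y $ en (k-1)) - a k * y $ first_idx"
proof -
  have "(comp *v y) $ en k = (\<Sum>c\<in>UNIV. if 0 < k \<and> ix c = k - 1 then y $ c else 0) - a k * y $ first_idx"
    using assms by (simp add: matrix_vector_mult_def comp_def left_diff_distrib sum_subtractf if_zero_mult)
  also have "(\<Sum>c\<in>UNIV. if 0 < k \<and> ix c = k - 1 then y $ c else 0) = (if k = 0 then 0 else y $ en (k-1))"
    using assms by (auto simp: ix_eq_iff)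
  finally show ?thesis .
qed

lemma comp_w: "comp *v w = - numer"
  unfolding vec_eq_iff_en
proof (intro allI impI)
  fix k assume k: "k < CARD('m)"
  show "(comp *v w) $ en k = (- numer) $ en k"
    using k unit_dc_gain monic strictly_proper
    by (cases k) (simp_all add: comp_mult numer_def w_def)
qed

lemma shear_input_vec: "shear *v input_vec = numer"
proof -
  have "shear *v ones = w" by (simp add: shear_mult u_def)
  then show ?thesis
    by (simp add: input_vec_def state_matrix_def comp_w shear_shear_inv
        matrix_vector_mult_uminus_right flip: matrix_vector_mul_assoc)
qed

lemma cmat_state_matrix_mult: "cmat state_matrix *v x = cmat shear_inv *v (cmat comp *v (cmat shear *v x))"
  by (simp add: state_matrix_def cmat_matrix_mult matrix_vector_mul_assoc matrix_mul_assoc)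

lemma resolvent_output:
  assumes "(mat s - cmat state_matrix) *v x = cvec input_vec"
  shows "x $ first_idx * (s^CARD('m) + (\<Sum>k<CARD('m). of_real (a k) * s^k)) = (\<Sum>k<CARD('m). of_real (b k) * s^k)"
proof -
  define y where "y = cmat shear *v x"
  have "cmat shear *v ((mat s - cmat state_matrix) *v x) = cvec numer"
    using assms by (simp add: cmat_mult_cvec shear_input_vec)
  then have y_eq: "s *s y - cmat comp *v y = cvec numer"
    by (simp add: matrix_vector_mult_diff_rdistrib matrix_vector_mult_diff_distrib mat_mult_vector
        vector_scalar_commute cmat_state_matrix_mult cmat_shear_inverse y_def)
  have "y $ en (CARD('m) - 1) * (s^CARD('m) + (\<Sum>k<CARD('m). of_real (a k) * s^k)) = (\<Sum>k<CARD('m). of_real (b k) * s^k)"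
  proof (rule companion_recurrence_imp_poly_eq[where Y = "\<lambda>k. y $ en k"])
    fix k assume k: "k < CARD('m)"
    have "(s *s y - cmat comp *v y) $ en k = cvec numer $ en k" using y_eq by simp
    then show "s * y $ en k - (if k = 0 then 0 else y $ en (k - 1)) + of_real (a k) * y $ en (CARD('m) - 1) = of_real (b k)"
      using k en_last by (simp add: cmat_comp_mult numer_def algebra_simps)
  qed simp
  moreover have "y $ first_idx = x $ first_idx" by (simp add: y_def cmat_shear_mult)
  ultimately show ?thesis using en_last by simp
qed

lemma eigenvalue_is_root:
  assumes ev: "cmat state_matrix *v v = l *s v" and "v \<noteq> 0"
  shows "l^CARD('m) + (\<Sum>k<CARD('m). of_real (a k) * l^k) = 0"
proof -
  define y where "y = cmat shear *v v"
  have "y \<noteq> 0"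
    using \<open>v \<noteq> 0\<close> cmat_shear_inverse(2)[of v] by (auto simp: y_def)
  have "cmat comp *v y = l *s y"
    using arg_cong[OF ev, of "(*v) (cmat shear)"]
    by (simp add: vector_scalar_commute cmat_state_matrix_mult cmat_shear_inverse y_def)
  then have rec: "l * y $ en k - (if k = 0 then 0 else y $ en (k - 1)) + of_real (a k) * y $ en (CARD('m) - 1) = 0"
    if "k < CARD('m)" for k
  proof -
    have "(cmat comp *v y) $ en k = l * y $ en k"
      using \<open>cmat comp *v y = l *s y\<close> by simp
    then have "l * y $ en k = (if k = 0 then 0 else y $ en (k - 1)) - of_real (a k) * y $ first_idx"
      using that by (simp add: cmat_comp_mult)
    then show ?thesis by (simp only: en_last) simp
  qed
  have last_nz: "y $ en (CARD('m) - 1) \<noteq> 0"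
  proof
    assume last: "y $ en (CARD('m) - 1) = 0"
    have "y $ en k = 0" if "k \<le> CARD('m) - 1" for k
      using that
    proof (induction rule: inc_induct)
      case (step k)
      then show ?case using rec[of "Suc k"] last by simp
    qed (use last in simp)
    then have "y = 0" by (auto simp: vec_eq_iff_en)
    with \<open>y \<noteq> 0\<close> show False ..
  qed
  have "y $ en (CARD('m) - 1) * (l^CARD('m) + (\<Sum>k<CARD('m). of_real (a k) * l^k)) = (\<Sum>k<CARD('m). 0 * l^k)"
    by (rule companion_recurrence_imp_poly_eq) (use rec in simp_all)
  with last_nz show ?thesis by simp
qed

end

lemma poly_map_of_real_eq_sum:
  fixes p :: "real poly"
  assumes "degree p < N"
  shows "poly (map_poly (of_real :: real \<Rightarrow> complex) p) s = (\<Sum>i<N. of_real (coeff p i) * s^i)"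
proof -
  have "poly (map_poly (of_real :: real \<Rightarrow> complex) p) s = (\<Sum>i\<le>degree p. of_real (coeff p i) * s^i)"
    by (simp add: poly_altdef degree_map_poly coeff_map_poly)
  also have "\<dots> = (\<Sum>i<N. of_real (coeff p i) * s^i)"
    by (rule sum.mono_neutral_left) (use assms in \<open>auto simp: coeff_eq_0\<close>)
  finally show ?thesis .
qed

lemma state_space_realisation:
  fixes p q :: "real poly"
  assumes deg: "degree p < degree q" and order: "CARD('m::{finite,wellorder}) = degree q"
    and dc: "coeff p 0 = coeff q 0"
  obtains P :: "real^'m::{finite,wellorder}^'m::{finite,wellorder}" where
    "\<And>l v. cmat P *v v = l *s v \<Longrightarrow> v \<noteq> 0 \<Longrightarrow> poly (map_poly of_real q) l = 0"
    "\<And>s x. (mat s - cmat P) *v x = cvec (- (P *v ones)) \<Longrightarrow>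
        x $ first_idx * poly (map_poly of_real q) s = poly (map_poly of_real p) s"
proof -
  define m where "m = CARD('m)"
  define lc where "lc = lead_coeff q"
  have lc: "lc \<noteq> 0" using deg by (auto simp: lc_def)
  define a where "a k = coeff q k / lc" for k
  define b where "b k = coeff p k / lc" for k
  obtain en :: "nat \<Rightarrow> 'm" where "bij_betw en {..<m} UNIV" "en (m - 1) = first_idx"
    using enumeration_ending_at_first_idx unfolding m_def by blast
  then interpret R: companion_realisation en a b
    by unfold_locales (use lc deg dc in \<open>simp_all add: m_def a_def b_def order lc_def coeff_eq_0\<close>)
  have q: "poly (map_poly of_real q) s = of_real lc * (s^m + (\<Sum>k<m. of_real (a k) * s^k))" for s :: complex
  proof -
    have "poly (map_poly of_real q) s = (\<Sum>i<Suc m. of_real (coeff q i) * s^i)"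
      by (rule poly_map_of_real_eq_sum) (simp add: m_def order)
    then show ?thesis
      using lc by (simp add: a_def m_def order lc_def sum_distrib_left algebra_simps)
  qed
  have p: "poly (map_poly of_real p) s = of_real lc * (\<Sum>k<m. of_real (b k) * s^k)" for s :: complex
  proof -
    have "poly (map_poly of_real p) s = (\<Sum>i<m. of_real (coeff p i) * s^i)"
      by (rule poly_map_of_real_eq_sum) (simp add: m_def order deg)
    then show ?thesis
      using lc by (simp add: b_def sum_distrib_left algebra_simps)
  qed
  show thesis
  proof (rule that[of R.state_matrix])
    show "poly (map_poly of_real q) l = 0" if "cmat R.state_matrix *v v = l *s v" "v \<noteq> 0" for l v
      using R.eigenvalue_is_root[OF that] by (simp add: q m_def)
    show "x $ first_idx * poly (map_poly of_real q) s = poly (map_poly of_real p) s"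
      if "(mat s - cmat R.state_matrix) *v x = cvec (- (R.state_matrix *v ones))" for s x
      using R.resolvent_output[of s x] that by (simp add: p q m_def R.input_vec_def)
  qed
qed

section \<open>Poles of a bounded Laplace transform\<close>

lemma map_poly_of_real_add: "map_poly (of_real :: real \<Rightarrow> complex) (p + q) = map_poly of_real p + map_poly of_real q"
  by (intro poly_eqI) (simp_all add: coeff_map_poly)

lemma map_poly_of_real_mult: "map_poly (of_real :: real \<Rightarrow> complex) (p * q) = map_poly of_real p * map_poly of_real q"
  by (intro poly_eqI) (simp_all add: coeff_map_poly coeff_mult)

lemma coprime_imp_no_common_root:
  fixes p q :: "real poly"
  assumes "coprime p q" and "poly (map_poly of_real q) l = (0::complex)"
  shows "poly (map_poly of_real p) l \<noteq> 0"
proof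
  assume "poly (map_poly of_real p) l = 0"
  obtain u v where "u * p + v * q = 1"
    using bezout_coefficients_fst_snd[of p q] assms(1) by (metis coprime_iff_gcd_eq_1)
  then have "poly (map_poly of_real (u * p + v * q)) l = (1::complex)" by simp
  with \<open>poly (map_poly of_real p) l = 0\<close> assms(2) show False
    by (simp add: map_poly_of_real_add map_poly_of_real_mult)
qed

lemma poly_divide_tendsto_infinity_at_root:
  fixes P Q :: "complex poly"
  assumes "Q \<noteq> 0" and "poly Q l = 0" and "poly P l \<noteq> 0"
  shows "filterlim (\<lambda>r::real. poly P (l + of_real r) / poly Q (l + of_real r)) at_infinity (at_right 0)"
proof -
  have lim: "((\<lambda>r::real. poly R (l + of_real r)) \<longlongrightarrow> poly R l) (at_right 0)" for R
    by (auto intro!: tendsto_eq_intros)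
  have "finite {r::real. poly Q (l + of_real r) = 0}"
    by (rule finite_subset[OF _ finite_imageI[OF poly_roots_finite[OF assms(1)], of "\<lambda>z. Re (z - l)"]])
       (auto intro!: image_eqI)
  then have "\<forall>\<^sub>F r in at 0. r \<notin> {r::real. poly Q (l + of_real r) = 0}"
    using islimpt_finite islimpt_iff_eventually by blast
  then have "\<forall>\<^sub>F r in at_right 0. poly Q (l + of_real r) \<noteq> 0"
    by (auto intro: filter_leD[OF at_le[OF subset_UNIV]])
  then have "filterlim (\<lambda>r. poly Q (l + of_real r)) (at 0) (at_right 0)"
    using lim[of Q] assms(2) by (simp add: filterlim_at)
  then have "filterlim (\<lambda>r. poly P (l + of_real r) * inverse (poly Q (l + of_real r))) at_infinity (at_right 0)"
    by (intro tendsto_mult_filterlim_at_infinity[OF lim assms(3)]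
        filterlim_compose[OF filterlim_inverse_at_infinity])
  then show ?thesis by (simp add: field_simps)
qed

lemma norm_laplace_le_integral_abs:
  fixes h :: "real \<Rightarrow> real"
  assumes "h absolutely_integrable_on {0..}" and "Re s \<ge> 0"
    and "((\<lambda>t. complex_of_real (h t) * exp (- s * complex_of_real t)) has_integral F) {0..}"
  shows "norm F \<le> integral {0..} (\<lambda>t. \<bar>h t\<bar>)"
proof -
  have "norm (integral {0..} (\<lambda>t. complex_of_real (h t) * exp (- s * complex_of_real t)))
      \<le> integral {0..} (\<lambda>t. \<bar>h t\<bar>)"
  proof (rule integral_norm_bound_integral)
    show "(\<lambda>t. complex_of_real (h t) * exp (- s * complex_of_real t)) integrable_on {0..}"
      using assms(3) by blast
    show "(\<lambda>t. \<bar>h t\<bar>) integrable_on {0..}"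
      using assms(1) unfolding absolutely_integrable_on_def by simp
    fix t :: real assume "t \<in> {0..}"
    then have "exp (- (Re s * t)) \<le> 1" using assms(2) by simp
    then show "norm (complex_of_real (h t) * exp (- s * complex_of_real t)) \<le> \<bar>h t\<bar>"
      by (simp add: norm_mult mult_left_le)
  qed
  then show ?thesis using assms(3) by (simp add: integral_unique)
qed

lemma laplace_ratfun_roots_in_left_half_plane:
  fixes h :: "real \<Rightarrow> real" and p q :: "real poly"
  assumes bibo: "h absolutely_integrable_on {0..}"
    and laplace: "\<And>s. Re s > 0 \<Longrightarrow>
        ((\<lambda>t. complex_of_real (h t) * exp (- s * complex_of_real t)) has_integral ratfun p q s) {0..}"
    and "coprime p q" and "q \<noteq> 0" and root: "poly (map_poly of_real q) l = 0"
  shows "Re l < 0"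
proof (rule ccontr)
  assume "\<not> Re l < 0"
  define M where "M = integral {0..} (\<lambda>t. \<bar>h t\<bar>)"
  have "M \<ge> 0"
    using bibo unfolding M_def absolutely_integrable_on_def by (intro integral_nonneg) auto
  have "filterlim (\<lambda>r::real. ratfun p q (l + of_real r)) at_infinity (at_right 0)"
    unfolding ratfun_def
    using poly_divide_tendsto_infinity_at_root root coprime_imp_no_common_root[OF \<open>coprime p q\<close> root]
      \<open>q \<noteq> 0\<close> by (simp add: map_poly_eq_0_iff)
  then have "\<forall>\<^sub>F r in at_right 0. M + 1 \<le> norm (ratfun p q (l + of_real r)) \<and> r > 0"
    using \<open>M \<ge> 0\<close> by (auto simp: filterlim_at_infinity[of 0] intro: eventually_conj eventually_at_right_less)
  moreover have False if "M + 1 \<le> norm (ratfun p q (l + of_real r))" "r > 0" for r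
  proof -
    have "Re (l + of_real r) > 0" using \<open>\<not> Re l < 0\<close> that(2) by simp
    then have "norm (ratfun p q (l + of_real r)) \<le> M"
      using norm_laplace_le_integral_abs[OF bibo _ laplace] by (simp add: M_def)
    with that(1) show False by simp
  qed
  ultimately have "\<forall>\<^sub>F r in at_right (0::real). False"
    by (elim eventually_mono) blast
  then show False by simp
qed

section \<open>The matrix exponential\<close>

definition mat_l1_norm :: "real^'n^'n \<Rightarrow> real" where
  "mat_l1_norm A = (\<Sum>i\<in>UNIV. \<Sum>j\<in>UNIV. \<bar>A $ i $ j\<bar>)"

lemma mat_l1_norm_nonneg: "mat_l1_norm A \<ge> 0"
  by (simp add: mat_l1_norm_def sum_nonneg)

lemma row_sum_le_mat_l1_norm: "(\<Sum>j\<in>UNIV. \<bar>A $ i $ j\<bar>) \<le> mat_l1_norm A"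
  unfolding mat_l1_norm_def by (rule member_le_sum) (auto intro: sum_nonneg)

lemma abs_entry_le_mat_l1_norm: "\<bar>A $ i $ j\<bar> \<le> mat_l1_norm A"
  by (rule order_trans[OF member_le_sum row_sum_le_mat_l1_norm]) auto

lemma mat_l1_norm_mult_le: "mat_l1_norm (A ** B) \<le> mat_l1_norm A * mat_l1_norm B"
proof -
  have swap: "(\<Sum>j\<in>UNIV. \<Sum>k\<in>UNIV. \<bar>A $ i $ k\<bar> * \<bar>B $ k $ j\<bar>) =
      (\<Sum>k\<in>UNIV. \<bar>A $ i $ k\<bar> * (\<Sum>j\<in>UNIV. \<bar>B $ k $ j\<bar>))" for i
    by (simp add: sum_distrib_left sum.swap[of "\<lambda>j k. \<bar>A $ i $ k\<bar> * \<bar>B $ k $ j\<bar>"])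
  have "mat_l1_norm (A ** B) \<le> (\<Sum>i\<in>UNIV. \<Sum>j\<in>UNIV. \<Sum>k\<in>UNIV. \<bar>A $ i $ k\<bar> * \<bar>B $ k $ j\<bar>)"
    unfolding mat_l1_norm_def matrix_matrix_mult_def
    by (intro sum_mono) (simp, rule order_trans[OF sum_abs], simp add: abs_mult)
  also have "\<dots> = (\<Sum>i\<in>UNIV. \<Sum>k\<in>UNIV. \<bar>A $ i $ k\<bar> * (\<Sum>j\<in>UNIV. \<bar>B $ k $ j\<bar>))"
    by (simp add: swap)
  also have "\<dots> \<le> (\<Sum>i\<in>UNIV. \<Sum>k\<in>UNIV. \<bar>A $ i $ k\<bar> * mat_l1_norm B)"
    by (intro sum_mono mult_left_mono row_sum_le_mat_l1_norm) auto
  also have "\<dots> = mat_l1_norm A * mat_l1_norm B"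
    by (simp add: mat_l1_norm_def sum_distrib_right)
  finally show ?thesis .
qed

lemma mat_l1_norm_mat_pow_le: "mat_l1_norm (mat_pow A k) \<le> real CARD('n) * mat_l1_norm A ^ k"
  for A :: "real^'n^'n"
proof (induction k)
  case 0
  then show ?case by (simp add: mat_l1_norm_def mat_def if_distrib cong: if_cong)
next
  case (Suc k)
  have "mat_l1_norm (mat_pow A (Suc k)) \<le> mat_l1_norm A * mat_l1_norm (mat_pow A k)"
    by (simp add: mat_l1_norm_mult_le)
  also have "\<dots> \<le> mat_l1_norm A * (real CARD('n) * mat_l1_norm A ^ k)"
    by (intro mult_left_mono Suc mat_l1_norm_nonneg)
  finally show ?case by (simp add: algebra_simps)
qed

lemma norm_le_mat_l1_norm: "norm A \<le> mat_l1_norm A"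
proof -
  have "norm A \<le> (\<Sum>i\<in>UNIV. norm (A $ i))"
    by (simp add: norm_vec_def L2_set_le_sum)
  also have "\<dots> \<le> mat_l1_norm A"
    unfolding mat_l1_norm_def by (intro sum_mono norm_le_l1_cart)
  finally show ?thesis .
qed

lemma mat_pow_scaleR: "mat_pow (c *\<^sub>R A) k = c^k *\<^sub>R mat_pow A k"
  for A :: "real^'n^'n"
proof (induction k)
  case (Suc k)
  have "mat_pow (c *\<^sub>R A) (Suc k) = (c *\<^sub>R A) ** (c^k *\<^sub>R mat_pow A k)"
    using Suc by simp
  also have "\<dots> = (c * c^k) *\<^sub>R (A ** mat_pow A k)"
    by (simp add: vec_eq_iff matrix_matrix_mult_def sum_distrib_left algebra_simps)
  finally show ?case by simp
qed simp

lemma mat_pow_commute: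
  assumes "A ** B = B ** A"
  shows "A ** mat_pow B k = mat_pow B k ** A"
proof (induction k)
  case (Suc k)
  have "A ** mat_pow B (Suc k) = (A ** B) ** mat_pow B k"
    by (simp add: matrix_mul_assoc)
  also have "\<dots> = B ** (A ** mat_pow B k)"
    by (simp add: assms matrix_mul_assoc)
  also have "\<dots> = mat_pow B (Suc k) ** A"
    by (simp add: Suc matrix_mul_assoc)
  finally show ?case .
qed simp

lemma summable_mat_exp_series: "summable (\<lambda>k. (1 / fact k) *\<^sub>R mat_pow A k)"
  for A :: "real^'n^'n"
proof (rule summable_comparison_test')
  show "summable (\<lambda>k. real CARD('n) * (inverse (fact k) * mat_l1_norm A ^ k))"
    by (intro summable_mult summable_exp)
  fix k :: nat
  have "norm ((1 / fact k) *\<^sub>R mat_pow A k) = (1 / fact k) * norm (mat_pow A k)"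
    by simp
  also have "\<dots> \<le> (1 / fact k) * (real CARD('n) * mat_l1_norm A ^ k)"
    by (intro mult_left_mono order_trans[OF norm_le_mat_l1_norm mat_l1_norm_mat_pow_le]) auto
  finally show "norm ((1 / fact k) *\<^sub>R mat_pow A k) \<le> real CARD('n) * (inverse (fact k) * mat_l1_norm A ^ k)"
    by (simp add: field_simps)
qed

lemma bounded_linear_matrix_mult_left: "bounded_linear (\<lambda>X::real^'n^'m. A ** X)"
  unfolding linear_conv_bounded_linear[symmetric]
  by (intro linearI) (simp_all add: vec_eq_iff matrix_matrix_mult_def sum.distrib sum_distrib_left algebra_simps)

lemma bounded_linear_matrix_mult_right: "bounded_linear (\<lambda>X::real^'n^'m. X ** A)"
  unfolding linear_conv_bounded_linear[symmetric]
  by (intro linearI) (simp_all add: vec_eq_iff matrix_matrix_mult_def sum.distrib sum_distrib_left algebra_simps)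

lemma mat_exp_commute:
  assumes "A ** B = B ** A"
  shows "A ** mat_exp B = mat_exp B ** A"
proof -
  have "A ** mat_exp B = (\<Sum>k. A ** ((1 / fact k) *\<^sub>R mat_pow B k))"
    unfolding mat_exp_def
    using bounded_linear.suminf[OF bounded_linear_matrix_mult_left[of A] summable_mat_exp_series[of B]] by simp
  also have "\<dots> = (\<Sum>k. ((1 / fact k) *\<^sub>R mat_pow B k) ** A)"
    using mat_pow_commute[OF assms]
    by (simp add: linear_cmul[OF bounded_linear.linear[OF bounded_linear_matrix_mult_left]]
        linear_cmul[OF bounded_linear.linear[OF bounded_linear_matrix_mult_right]])
  also have "\<dots> = mat_exp B ** A"
    unfolding mat_exp_def
    using bounded_linear.suminf[OF bounded_linear_matrix_mult_right[of A] summable_mat_exp_series[of B]] by simp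
  finally show ?thesis .
qed

lemma mat_exp_zero [simp]: "mat_exp (0 :: real^'n^'n) = mat 1"
proof -
  have "(\<lambda>k. (1 / fact k) *\<^sub>R mat_pow (0 :: real^'n^'n) k) = (\<lambda>k. if k = 0 then mat 1 else 0)"
    by (rule ext, case_tac k) simp_all
  then show ?thesis
    unfolding mat_exp_def using sums_single[of 0 "\<lambda>_. mat 1 :: real^'n^'n"] sums_unique by metis
qed

definition mat_exp_coeff :: "real^'n^'n \<Rightarrow> 'n \<Rightarrow> 'n \<Rightarrow> nat \<Rightarrow> real" where
  "mat_exp_coeff A i j k = mat_pow A k $ i $ j / fact k"

lemma mat_exp_nth: "mat_exp A $ i $ j = (\<Sum>k. mat_pow A k $ i $ j / fact k)"
  for A :: "real^'n^'n"
proof -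
  have "bounded_linear (\<lambda>X::real^'n^'n. X $ i $ j)"
    using bounded_linear_compose[OF bounded_linear_vec_nth bounded_linear_vec_nth] .
  from bounded_linear.suminf[OF this summable_mat_exp_series[of A]]
  show ?thesis by (simp add: mat_exp_def)
qed

lemma mat_exp_scaleR_nth: "mat_exp (t *\<^sub>R A) $ i $ j = (\<Sum>k. mat_exp_coeff A i j k * t^k)"
  for A :: "real^'n^'n"
  by (simp add: mat_exp_nth mat_pow_scaleR mat_exp_coeff_def mult.commute)

lemma abs_mat_exp_coeff_le:
  "\<bar>mat_exp_coeff A i j k * y^k\<bar> \<le> real CARD('n) * (inverse (fact k) * (mat_l1_norm A * \<bar>y\<bar>) ^ k)"
  for A :: "real^'n^'n"
proof -
  have "\<bar>mat_exp_coeff A i j k * y^k\<bar> = \<bar>mat_pow A k $ i $ j\<bar> / fact k * \<bar>y\<bar>^k"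
    by (simp add: mat_exp_coeff_def abs_mult power_abs)
  also have "\<dots> \<le> (real CARD('n) * mat_l1_norm A ^ k) / fact k * \<bar>y\<bar>^k"
    using abs_entry_le_mat_l1_norm[of "mat_pow A k" i j] mat_l1_norm_mat_pow_le[of A k]
    by (intro mult_right_mono divide_right_mono) auto
  finally show ?thesis by (simp add: field_simps power_mult_distrib)
qed

lemma summable_abs_mat_exp_coeff: "summable (\<lambda>k. \<bar>mat_exp_coeff A i j k * y^k\<bar>)"
  for A :: "real^'n^'n"
  by (rule summable_comparison_test'[where g = "\<lambda>k. real CARD('n) * (inverse (fact k) * (mat_l1_norm A * \<bar>y\<bar>) ^ k)"])
     (auto intro: summable_mult summable_exp simp: abs_mat_exp_coeff_le)

lemma summable_mat_exp_coeff: "summable (\<lambda>k. mat_exp_coeff A i j k * y^k)"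
  for A :: "real^'n^'n"
  by (rule summable_rabs_cancel[OF summable_abs_mat_exp_coeff])

lemma abs_mat_exp_nth_le: "\<bar>mat_exp (t *\<^sub>R A) $ i $ j\<bar> \<le> real CARD('n) * exp (mat_l1_norm A * \<bar>t\<bar>)"
  for A :: "real^'n^'n"
proof -
  have "\<bar>mat_exp (t *\<^sub>R A) $ i $ j\<bar> \<le> (\<Sum>k. \<bar>mat_exp_coeff A i j k * t^k\<bar>)"
    unfolding mat_exp_scaleR_nth by (rule summable_rabs[OF summable_abs_mat_exp_coeff])
  also have "\<dots> \<le> (\<Sum>k. real CARD('n) * (inverse (fact k) * (mat_l1_norm A * \<bar>t\<bar>) ^ k))"
    by (intro suminf_le abs_mat_exp_coeff_le summable_abs_mat_exp_coeff summable_mult summable_exp)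
  also have "\<dots> = real CARD('n) * exp (mat_l1_norm A * \<bar>t\<bar>)"
    using suminf_mult[OF summable_exp, of "real CARD('n)" "mat_l1_norm A * \<bar>t\<bar>"]
    by (simp add: exp_def inverse_eq_divide)
  finally show ?thesis .
qed

lemma diffs_mat_exp_coeff: "diffs (mat_exp_coeff A i j) k = mat_pow A (Suc k) $ i $ j / fact k"
proof -
  have "fact (Suc k) = real (Suc k) * fact k" "real (Suc k) \<noteq> 0"
    by simp_all
  then show ?thesis
    unfolding diffs_def mat_exp_coeff_def by (simp only:) (simp del: mat_pow.simps of_nat_Suc)
qed

lemma has_real_derivative_mat_exp_nth:
  "((\<lambda>t. mat_exp (t *\<^sub>R A) $ i $ j) has_real_derivative (A ** mat_exp (t *\<^sub>R A)) $ i $ j) (at t)"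
proof -
  have "((\<lambda>t. \<Sum>k. mat_exp_coeff A i j k * t^k) has_real_derivative
      (\<Sum>k. diffs (mat_exp_coeff A i j) k * t^k)) (at t)"
    by (rule termdiffs_strong_converges_everywhere) (rule summable_mat_exp_coeff)
  also have "(\<Sum>k. diffs (mat_exp_coeff A i j) k * t^k) = (\<Sum>k. \<Sum>l\<in>UNIV. A $ i $ l * (mat_exp_coeff A l j k * t^k))"
    by (simp add: diffs_mat_exp_coeff matrix_matrix_mult_def mat_exp_coeff_def sum_distrib_left
        sum_divide_distrib sum_distrib_right algebra_simps)
  also have "\<dots> = (\<Sum>l\<in>UNIV. \<Sum>k. A $ i $ l * (mat_exp_coeff A l j k * t^k))"
    by (rule suminf_sum) (intro summable_mult summable_mat_exp_coeff)
  also have "\<dots> = (A ** mat_exp (t *\<^sub>R A)) $ i $ j"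
    by (simp add: matrix_matrix_mult_def mat_exp_scaleR_nth suminf_mult summable_mat_exp_coeff)
  finally show ?thesis by (simp only: mat_exp_scaleR_nth)
qed

lemma has_real_derivative_mat_exp_mult_nth:
  fixes A :: "real^'n^'n"
  shows "((\<lambda>t. (mat_exp (t *\<^sub>R A) *v v) $ i) has_real_derivative (A *v (mat_exp (t *\<^sub>R A) *v v)) $ i) (at t)"
proof -
  have "((\<lambda>t. \<Sum>j\<in>UNIV. mat_exp (t *\<^sub>R A) $ i $ j * v $ j) has_real_derivative
      (\<Sum>j\<in>UNIV. (A ** mat_exp (t *\<^sub>R A)) $ i $ j * v $ j)) (at t)"
    by (intro DERIV_sum DERIV_cmult_right has_real_derivative_mat_exp_nth)
  then show ?thesis
    by (simp add: matrix_vector_mul_assoc) (simp add: matrix_vector_mult_def)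
qed

lemma continuous_on_mat_exp_mult_nth: "continuous_on S (\<lambda>t. (mat_exp (t *\<^sub>R A) *v v) $ i)"
  for A :: "real^'n^'n"
  by (rule continuous_at_imp_continuous_on) (use DERIV_isCont[OF has_real_derivative_mat_exp_mult_nth] in blast)

lemma abs_mat_exp_mult_nth_le:
  fixes A :: "real^'n^'n"
  assumes "t \<ge> 0"
  shows "\<bar>(mat_exp (t *\<^sub>R A) *v v) $ i\<bar> \<le> (real CARD('n) * (\<Sum>j\<in>UNIV. \<bar>v $ j\<bar>)) * exp (mat_l1_norm A * t)"
proof -
  have "\<bar>(mat_exp (t *\<^sub>R A) *v v) $ i\<bar> \<le> (\<Sum>j\<in>UNIV. \<bar>mat_exp (t *\<^sub>R A) $ i $ j\<bar> * \<bar>v $ j\<bar>)"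
    unfolding matrix_vector_mult_def by (simp, rule order_trans[OF sum_abs], simp add: abs_mult)
  also have "\<dots> \<le> (\<Sum>j\<in>UNIV. (real CARD('n) * exp (mat_l1_norm A * \<bar>t\<bar>)) * \<bar>v $ j\<bar>)"
    by (intro sum_mono mult_right_mono abs_mat_exp_nth_le) auto
  finally show ?thesis using assms by (simp add: sum_distrib_left sum_distrib_right algebra_simps)
qed

lemma integral_mat_exp_mult_nth:
  fixes A :: "real^'n^'n"
  assumes "t \<ge> 0"
  shows "integral {0..t} (\<lambda>\<tau>. (mat_exp (\<tau> *\<^sub>R A) *v (A *v v)) $ i) = (mat_exp (t *\<^sub>R A) *v v) $ i - v $ i"
proof -
  have "((\<lambda>\<tau>. (mat_exp (\<tau> *\<^sub>R A) *v (A *v v)) $ i) has_integral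
      (mat_exp (t *\<^sub>R A) *v v) $ i - (mat_exp (0 *\<^sub>R A) *v v) $ i) {0..t}"
  proof (rule fundamental_theorem_of_calculus[OF assms])
    fix \<tau> :: real
    have "A *v (mat_exp (\<tau> *\<^sub>R A) *v v) = mat_exp (\<tau> *\<^sub>R A) *v (A *v v)"
      using mat_exp_commute[of A "\<tau> *\<^sub>R A"] by (simp add: matrix_vector_mul_assoc matrix_scalar_ac)
    with has_real_derivative_mat_exp_mult_nth[of A v i \<tau>]
    show "((\<lambda>\<tau>. (mat_exp (\<tau> *\<^sub>R A) *v v) $ i) has_vector_derivative (mat_exp (\<tau> *\<^sub>R A) *v (A *v v)) $ i)
        (at \<tau> within {0..t})"
      by (simp add: has_real_derivative_iff_has_vector_derivative[symmetric] has_field_derivative_at_within)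
  qed
  then show ?thesis by (simp add: integral_unique)
qed

section \<open>Uniqueness of the Laplace transform\<close>

lemma absolutely_integrable_bounded_continuous_mult:
  fixes \<phi> \<beta> :: "real \<Rightarrow> real"
  assumes "\<phi> absolutely_integrable_on {0..}" and "continuous_on {0..} \<beta>"
    and "\<And>t. t \<ge> 0 \<Longrightarrow> \<bar>\<beta> t\<bar> \<le> B"
  shows "(\<lambda>t. \<beta> t * \<phi> t) absolutely_integrable_on {0..}"
proof (rule absolutely_integrable_bounded_measurable_product_real[OF _ _ _ assms(1)])
  show "\<beta> \<in> borel_measurable (lebesgue_on {0..})"
    by (rule continuous_imp_measurable_on_sets_lebesgue[OF assms(2)]) simp
  show "bounded (\<beta> ` {0..})"
    unfolding bounded_iff using assms(3) by auto
qed simp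

lemma integral_pos_if_continuous_nonneg:
  fixes f :: "real \<Rightarrow> real"
  assumes cont: "continuous_on {0..} f" and int: "f integrable_on {0..}"
    and nonneg: "\<And>t. t \<ge> 0 \<Longrightarrow> f t \<ge> 0" and "t0 \<ge> 0" and "f t0 > 0"
  shows "integral {0..} f > 0"
proof -
  obtain d where d: "d > 0" "\<And>t. t \<ge> 0 \<Longrightarrow> dist t t0 < d \<Longrightarrow> dist (f t) (f t0) < f t0 / 2"
    using cont \<open>t0 \<ge> 0\<close> \<open>f t0 > 0\<close> unfolding continuous_on_iff by (metis atLeast_iff half_gt_zero)
  define J where "J = {t0..t0 + d/2}"
  have J: "J \<subseteq> {0..}" using \<open>t0 \<ge> 0\<close> by (auto simp: J_def)
  have intJ: "f integrable_on J"
    unfolding J_def by (rule integrable_continuous_interval, rule continuous_on_subset[OF cont])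
      (use J in \<open>simp add: J_def\<close>)
  have "d / 2 * (f t0 / 2) = integral J (\<lambda>_. f t0 / 2)"
    using d by (simp add: J_def)
  also have "\<dots> \<le> integral J f"
  proof (rule integral_le[OF _ intJ])
    show "(\<lambda>_. f t0 / 2) integrable_on J" unfolding J_def by (rule integrable_const_ivl)
    show "f t0 / 2 \<le> f t" if "t \<in> J" for t
    proof -
      have "t \<ge> 0" "dist t t0 < d" using that J \<open>d > 0\<close> by (auto simp: J_def dist_real_def)
      then have "\<bar>f t - f t0\<bar> < f t0 / 2" using d(2) by (simp add: dist_real_def)
      then show ?thesis by linarith
    qed
  qed
  also have "\<dots> \<le> integral {0..} f"
    by (rule integral_subset_le[OF J intJ int]) (use nonneg in auto)
  finally have "d / 2 * (f t0 / 2) \<le> integral {0..} f" .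
  moreover have "d / 2 * (f t0 / 2) > 0" using d \<open>f t0 > 0\<close> by simp
  ultimately show ?thesis by linarith
qed

lemma integral_exp_moments_zero_imp_zero:
  fixes \<phi> \<Psi> :: "real \<Rightarrow> real"
  assumes ai: "\<phi> absolutely_integrable_on {0..}"
    and mom: "\<And>k::nat. ((\<lambda>t. \<phi> t * exp (-t) ^ k) has_integral 0) {0..}"
    and cont: "continuous_on {0..1} \<Psi>"
  shows "integral {0..} (\<lambda>t. \<Psi> (exp (-t)) * \<phi> t) = 0"
proof -
  define I where "I = integral {0..} (\<lambda>t. \<Psi> (exp (-t)) * \<phi> t)"
  define L where "L = integral {0..} (\<lambda>t. \<bar>\<phi> t\<bar>)"
  have abs_int: "(\<lambda>t. \<bar>\<phi> t\<bar>) integrable_on {0..}"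
    using ai unfolding absolutely_integrable_on_def by simp
  have "L \<ge> 0" unfolding L_def by (rule integral_nonneg[OF abs_int]) auto
  obtain B where B: "\<And>u. u \<in> {0..1} \<Longrightarrow> \<bar>\<Psi> u\<bar> \<le> B"
    using compact_imp_bounded[OF compact_continuous_image[OF cont compact_Icc]]
    unfolding bounded_iff by fastforce
  have ai_\<Psi>: "(\<lambda>t. \<Psi> (exp (-t)) * \<phi> t) absolutely_integrable_on {0..}"
    by (rule absolutely_integrable_bounded_continuous_mult[OF ai _ B])
       (auto intro!: continuous_on_compose2[OF cont] continuous_intros)
  have bound: "\<bar>I\<bar> \<le> \<epsilon> * L" if "\<epsilon> > 0" for \<epsilon>
  proof -
    obtain g where g: "real_polynomial_function g" "\<And>u. u \<in> {0..1} \<Longrightarrow> \<bar>\<Psi> u - g u\<bar> < \<epsilon>"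
      using Stone_Weierstrass_real_polynomial_function[OF compact_Icc cont \<open>\<epsilon> > 0\<close>] by blast
    obtain c N where g_eq: "g = (\<lambda>u. \<Sum>i\<le>N. c i * u^i)"
      using g(1) real_polynomial_function_iff_sum by auto
    have g_int: "((\<lambda>t. g (exp (-t)) * \<phi> t) has_integral 0) {0..}"
    proof -
      have "((\<lambda>t. \<Sum>i\<le>N. c i * (\<phi> t * exp (-t) ^ i)) has_integral (\<Sum>i\<le>N. c i * 0)) {0..}"
        by (intro has_integral_sum has_integral_mult_right mom) auto
      then show ?thesis by (simp add: g_eq sum_distrib_left sum_distrib_right algebra_simps)
    qed
    have diff_int: "((\<lambda>t. (\<Psi> (exp (-t)) - g (exp (-t))) * \<phi> t) has_integral I) {0..}"
      using has_integral_diff[OF integrable_integral[OF set_lebesgue_integral_eq_integral(1)[OF ai_\<Psi>]] g_int]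
      by (simp add: I_def left_diff_distrib)
    have "\<bar>I\<bar> = norm (integral {0..} (\<lambda>t. (\<Psi> (exp (-t)) - g (exp (-t))) * \<phi> t))"
      using integral_unique[OF diff_int] by simp
    also have "\<dots> \<le> integral {0..} (\<lambda>t. \<epsilon> * \<bar>\<phi> t\<bar>)"
    proof (rule integral_norm_bound_integral)
      show "(\<lambda>t. (\<Psi> (exp (-t)) - g (exp (-t))) * \<phi> t) integrable_on {0..}"
        using diff_int by blast
      show "(\<lambda>t. \<epsilon> * \<bar>\<phi> t\<bar>) integrable_on {0..}"
        using integrable_on_cmult_left[OF abs_int, of \<epsilon>] by simp
      fix t :: real assume "t \<in> {0..}"
      then have "\<bar>\<Psi> (exp (-t)) - g (exp (-t))\<bar> < \<epsilon>" by (intro g(2)) auto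
      then show "norm ((\<Psi> (exp (-t)) - g (exp (-t))) * \<phi> t) \<le> \<epsilon> * \<bar>\<phi> t\<bar>"
        by (simp add: abs_mult mult_right_mono)
    qed
    also have "\<dots> = \<epsilon> * L" by (simp add: L_def)
    finally show ?thesis .
  qed
  have "\<bar>I\<bar> \<le> 0 + e" if "e > 0" for e
  proof -
    have "\<bar>I\<bar> \<le> e / (L + 1) * L"
      using \<open>L \<ge> 0\<close> \<open>e > 0\<close> by (intro bound) simp
    also have "\<dots> \<le> e"
      using \<open>L \<ge> 0\<close> \<open>e > 0\<close> by (simp add: field_simps)
    finally show ?thesis by simp
  qed
  then have "\<bar>I\<bar> \<le> 0"
    by (rule field_le_epsilon)
  then show ?thesis by (simp add: I_def)
qed

lemma exp_moments_zero_imp_nonpos: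
  fixes \<phi> :: "real \<Rightarrow> real"
  assumes cont: "continuous_on {0..} \<phi>" and ai: "\<phi> absolutely_integrable_on {0..}"
    and mom: "\<And>k::nat. ((\<lambda>t. \<phi> t * exp (-t) ^ k) has_integral 0) {0..}"
    and "t0 \<ge> 0"
  shows "\<phi> t0 \<le> 0"
proof (rule ccontr)
  assume "\<not> \<phi> t0 \<le> 0"
  then have "\<phi> t0 > 0" by simp
  obtain \<delta> where "\<delta> > 0" and \<delta>: "\<And>t. t \<ge> 0 \<Longrightarrow> \<bar>t - t0\<bar> < \<delta> \<Longrightarrow> \<phi> t > 0"
    using cont \<open>t0 \<ge> 0\<close> \<open>\<phi> t0 > 0\<close> unfolding continuous_on_iff dist_real_def
    by (metis atLeast_iff abs_minus_commute abs_less_iff diff_less_eq add.commute less_add_same_cancel1)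
  define u0 where "u0 = exp (-t0)"
  define r where "r = u0 * min (1 - exp (-\<delta>)) (exp \<delta> - 1)"
  have "r > 0" using \<open>\<delta> > 0\<close> by (simp add: r_def u0_def)
  have r_le: "r \<le> u0 * (1 - exp (-\<delta>))" "r \<le> u0 * (exp \<delta> - 1)"
    by (simp_all add: r_def u0_def)
  define \<Psi> where "\<Psi> u = max 0 (r - \<bar>u - u0\<bar>)" for u
  have near: "\<bar>t - t0\<bar> < \<delta>" if "\<bar>exp (-t) - u0\<bar> < r" for t
  proof -
    have "exp (-(t0 + \<delta>)) = u0 - u0 * (1 - exp (-\<delta>))" by (simp add: u0_def algebra_simps flip: exp_add)
    also have "\<dots> < exp (-t)" using that r_le(1) by (simp add: abs_less_iff)
    finally have "t < t0 + \<delta>" by simp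
    have "exp (-t) < u0 + u0 * (exp \<delta> - 1)" using that r_le(2) by (simp add: abs_less_iff)
    also have "\<dots> = exp (-(t0 - \<delta>))" by (simp add: u0_def algebra_simps flip: exp_add)
    finally have "t > t0 - \<delta>" by simp
    with \<open>t < t0 + \<delta>\<close> show ?thesis by (simp add: abs_less_iff)
  qed
  have cont_\<Psi>: "continuous_on S \<Psi>" for S
    unfolding \<Psi>_def by (intro continuous_intros)
  have ai_prod: "(\<lambda>t. \<Psi> (exp (-t)) * \<phi> t) absolutely_integrable_on {0..}"
    by (rule absolutely_integrable_bounded_continuous_mult[OF ai, where B = r])
       (use \<open>r > 0\<close> in \<open>auto intro!: continuous_on_compose2[OF cont_\<Psi>] continuous_intros simp: \<Psi>_def\<close>)
  have "integral {0..} (\<lambda>t. \<Psi> (exp (-t)) * \<phi> t) > 0"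
  proof (rule integral_pos_if_continuous_nonneg[OF _ _ _ \<open>t0 \<ge> 0\<close>])
    show "continuous_on {0..} (\<lambda>t. \<Psi> (exp (-t)) * \<phi> t)"
      by (intro continuous_intros continuous_on_compose2[OF cont_\<Psi>] cont) auto
    show "(\<lambda>t. \<Psi> (exp (-t)) * \<phi> t) integrable_on {0..}"
      using ai_prod by (simp add: absolutely_integrable_on_def)
    show "\<Psi> (exp (-t)) * \<phi> t \<ge> 0" if "t \<ge> 0" for t
      using near \<delta>[OF that] by (cases "\<bar>exp (-t) - u0\<bar> < r") (auto simp: \<Psi>_def)
    show "\<Psi> (exp (-t0)) * \<phi> t0 > 0"
      using \<open>r > 0\<close> \<open>\<phi> t0 > 0\<close> by (simp add: \<Psi>_def u0_def)
  qed
  moreover have "integral {0..} (\<lambda>t. \<Psi> (exp (-t)) * \<phi> t) = 0"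
    by (rule integral_exp_moments_zero_imp_zero[OF ai mom cont_\<Psi>])
  ultimately show False by simp
qed

lemma laplace_zero_imp_zero:
  fixes f :: "real \<Rightarrow> real"
  assumes cont: "continuous_on {0..} f"
    and ai: "(\<lambda>t. f t * exp (-s0 * t)) absolutely_integrable_on {0..}"
    and zero: "\<And>k::nat. ((\<lambda>t. f t * exp (-(s0 + real k) * t)) has_integral 0) {0..}"
    and "t \<ge> 0"
  shows "f t = 0"
proof -
  define \<phi> where "\<phi> t = f t * exp (-s0 * t)" for t
  have cont_\<phi>: "continuous_on {0..} \<phi>"
    unfolding \<phi>_def by (intro continuous_intros cont)
  have "\<phi> t * exp (-t) ^ k = f t * exp (-(s0 + real k) * t)" for t k
    by (simp add: \<phi>_def algebra_simps flip: exp_of_nat_mult exp_add)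
  then have mom: "((\<lambda>t. \<phi> t * exp (-t) ^ k) has_integral 0) {0..}" for k
    using zero[of k] by simp
  have "\<phi> t \<le> 0"
    using exp_moments_zero_imp_nonpos[OF cont_\<phi> _ mom \<open>t \<ge> 0\<close>] ai by (simp add: \<phi>_def[abs_def])
  moreover have "- \<phi> t \<le> 0"
  proof (rule exp_moments_zero_imp_nonpos[OF _ _ _ \<open>t \<ge> 0\<close>])
    show "continuous_on {0..} (\<lambda>t. - \<phi> t)" by (intro continuous_intros cont_\<phi>)
    show "(\<lambda>t. - \<phi> t) absolutely_integrable_on {0..}"
      using absolutely_integrable_scaleR_left[OF ai, of "-1"] by (simp add: \<phi>_def[abs_def])
    show "((\<lambda>t. - \<phi> t * exp (-t) ^ k) has_integral 0) {0..}" for k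
      using has_integral_neg[OF mom[of k]] by simp
  qed
  ultimately show ?thesis by (simp add: \<phi>_def)
qed

section \<open>The Laplace transform of a matrix exponential\<close>

lemma tendsto_integral_atLeastAtMost_real_of_nat:
  fixes f :: "real \<Rightarrow> real"
  assumes cont: "continuous_on {0..} f" and ai: "f absolutely_integrable_on {0..}"
  shows "(\<lambda>n. integral {0..real n} f) \<longlonglongrightarrow> integral {0..} f"
proof -
  define f_n where "f_n n t = (if t \<in> {0..real n} then f t else 0)" for n t
  have "(f has_integral integral {0..real n} f) {0..real n}" for n
    by (intro integrable_integral integrable_continuous_interval continuous_on_subset[OF cont]) auto
  then have f_n: "(f_n n has_integral integral {0..real n} f) {0..}" for n
    unfolding f_n_def using has_integral_restrict[of "{0..real n}" "{0..}" f] by auto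
  have "(\<lambda>n. integral {0..} (f_n n)) \<longlonglongrightarrow> integral {0..} f"
  proof (rule dominated_convergence(2)[where h = "\<lambda>t. \<bar>f t\<bar>"])
    show "f_n n integrable_on {0..}" for n using f_n by blast
    show "(\<lambda>t. \<bar>f t\<bar>) integrable_on {0..}"
      using ai unfolding absolutely_integrable_on_def by simp
    show "norm (f_n n t) \<le> \<bar>f t\<bar>" for n t by (simp add: f_n_def)
    show "(\<lambda>n. f_n n t) \<longlonglongrightarrow> f t" if "t \<in> {0..}" for t
    proof (rule tendsto_eventually)
      have "eventually (\<lambda>n. real n \<ge> t) sequentially"
        by (meson eventually_sequentiallyI nat_ceiling_le_eq)
      then show "eventually (\<lambda>n. f_n n t = f t) sequentially"
        by eventually_elim (use that in \<open>auto simp: f_n_def\<close>)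
    qed
  qed
  moreover have "integral {0..} (f_n n) = integral {0..real n} f" for n
    using f_n integral_unique by blast
  ultimately show ?thesis by simp
qed

lemma abs_mat_exp_laplace_integrand_le:
  fixes A :: "real^'n^'n"
  assumes "t \<ge> 0"
  shows "\<bar>(mat_exp (t *\<^sub>R A) *v v) $ i * exp (- s * t)\<bar>
    \<le> (real CARD('n) * (\<Sum>j\<in>UNIV. \<bar>v $ j\<bar>)) * exp (- (s - mat_l1_norm A) * t)"
proof -
  have "\<bar>(mat_exp (t *\<^sub>R A) *v v) $ i * exp (- s * t)\<bar> = \<bar>(mat_exp (t *\<^sub>R A) *v v) $ i\<bar> * exp (- s * t)"
    by (simp add: abs_mult)
  also have "\<dots> \<le> (real CARD('n) * (\<Sum>j\<in>UNIV. \<bar>v $ j\<bar>)) * exp (mat_l1_norm A * t) * exp (- s * t)"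
    using abs_mat_exp_mult_nth_le[OF assms] by (intro mult_right_mono) auto
  also have "\<dots> = (real CARD('n) * (\<Sum>j\<in>UNIV. \<bar>v $ j\<bar>)) * exp (- (s - mat_l1_norm A) * t)"
    by (simp add: algebra_simps flip: exp_add)
  finally show ?thesis .
qed

lemma absolutely_integrable_mat_exp_laplace:
  fixes A :: "real^'n^'n"
  assumes "s > mat_l1_norm A"
  shows "(\<lambda>t. (mat_exp (t *\<^sub>R A) *v v) $ i * exp (- s * t)) absolutely_integrable_on {0..}"
proof (rule measurable_bounded_by_integrable_imp_absolutely_integrable)
  show "(\<lambda>t. (mat_exp (t *\<^sub>R A) *v v) $ i * exp (- s * t)) \<in> borel_measurable (lebesgue_on {0..})"
    by (rule continuous_imp_measurable_on_sets_lebesgue)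
       (auto intro!: continuous_intros continuous_on_mat_exp_mult_nth)
  show "(\<lambda>t. (real CARD('n) * (\<Sum>j\<in>UNIV. \<bar>v $ j\<bar>)) * exp (- (s - mat_l1_norm A) * t)) integrable_on {0..}"
    using integrable_on_cmult_left[OF integrable_on_exp_minus_to_infinity[of "s - mat_l1_norm A" 0]] assms
    by simp
  show "norm ((mat_exp (t *\<^sub>R A) *v v) $ i * exp (- s * t))
      \<le> (real CARD('n) * (\<Sum>j\<in>UNIV. \<bar>v $ j\<bar>)) * exp (- (s - mat_l1_norm A) * t)" if "t \<in> {0..}" for t
    using abs_mat_exp_laplace_integrand_le[of t] that by simp
qed simp

lemma mat_exp_laplace_partial:
  fixes A :: "real^'n^'n" and v :: "real^'n" and s T :: real
  assumes "T \<ge> 0"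
  defines "I \<equiv> \<chi> j. integral {0..T} (\<lambda>t. (mat_exp (t *\<^sub>R A) *v v) $ j * exp (- s * t))"
  shows "A *v I - s *s I = exp (- s * T) *s (mat_exp (T *\<^sub>R A) *v v) - v"
proof -
  let ?y = "\<lambda>j t. (mat_exp (t *\<^sub>R A) *v v) $ j"
  have "(A *v I - s *s I) $ i = (exp (- s * T) *s (mat_exp (T *\<^sub>R A) *v v) - v) $ i" for i
  proof -
    let ?F = "\<lambda>t. exp (- s * t) * ?y i t"
    let ?g = "\<lambda>t. (\<Sum>j\<in>UNIV. A $ i $ j * (?y j t * exp (- s * t))) - s * (?y i t * exp (- s * t))"
    have I: "((\<lambda>t. ?y j t * exp (- s * t)) has_integral I $ j) {0..T}" for j
      unfolding I_def vec_lambda_beta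
      by (intro integrable_integral integrable_continuous_interval continuous_intros
          continuous_on_mat_exp_mult_nth)
    have "(?g has_integral (\<Sum>j\<in>UNIV. A $ i $ j * I $ j) - s * I $ i) {0..T}"
      by (intro has_integral_diff has_integral_sum has_integral_mult_right I) auto
    then have "(?g has_integral (A *v I - s *s I) $ i) {0..T}"
      by (simp add: matrix_vector_mult_def)
    moreover have "(?g has_integral (?F T - ?F 0)) {0..T}"
    proof (rule fundamental_theorem_of_calculus[OF \<open>T \<ge> 0\<close>])
      fix t
      have "(?F has_real_derivative - s * exp (- s * t) * ?y i t + exp (- s * t) * (A *v (mat_exp (t *\<^sub>R A) *v v)) $ i) (at t)"
        by (auto intro!: derivative_eq_intros has_real_derivative_mat_exp_mult_nth)
      then have "(?F has_real_derivative ?g t) (at t)"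
        by (rule DERIV_cong) (simp add: matrix_vector_mult_def sum_distrib_left sum_distrib_right algebra_simps sum_negf)
      then show "(?F has_vector_derivative ?g t) (at t within {0..T})"
        by (simp add: has_real_derivative_iff_has_vector_derivative[symmetric] has_field_derivative_at_within)
    qed
    ultimately show ?thesis
      by (simp add: has_integral_unique mult.commute)
  qed
  then show ?thesis by (simp add: vec_eq_iff)
qed

lemma mat_exp_laplace_resolvent:
  fixes A :: "real^'n^'n" and v :: "real^'n" and s :: real
  assumes "s > mat_l1_norm A"
  defines "Z \<equiv> \<chi> j. integral {0..} (\<lambda>t. (mat_exp (t *\<^sub>R A) *v v) $ j * exp (- s * t))"
  shows "s *s Z - A *v Z = v"
proof -
  define I where "I n = (\<chi> j. integral {0..real n} (\<lambda>t. (mat_exp (t *\<^sub>R A) *v v) $ j * exp (- s * t)))"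
    for n :: nat
  have I_lim: "(\<lambda>n. I n $ j) \<longlonglongrightarrow> Z $ j" for j
    unfolding I_def Z_def vec_lambda_beta
    by (intro tendsto_integral_atLeastAtMost_real_of_nat absolutely_integrable_mat_exp_laplace assms
        continuous_intros continuous_on_mat_exp_mult_nth)
  define C where "C = real CARD('n) * (\<Sum>j\<in>UNIV. \<bar>v $ j\<bar>)"
  have decay: "(\<lambda>n. exp (- s * real n) * (mat_exp (real n *\<^sub>R A) *v v) $ i) \<longlonglongrightarrow> 0" for i
  proof (rule Lim_null_comparison)
    show "\<forall>\<^sub>F n in sequentially. norm (exp (- s * real n) * (mat_exp (real n *\<^sub>R A) *v v) $ i)
        \<le> C * exp (- (s - mat_l1_norm A)) ^ n"
      using abs_mat_exp_laplace_integrand_le[of "real n" A v i s for n]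
      by (intro always_eventually) (simp add: C_def mult.commute flip: exp_of_nat_mult)
    show "(\<lambda>n. C * exp (- (s - mat_l1_norm A)) ^ n) \<longlonglongrightarrow> 0"
      using assms by (intro tendsto_mult_right_zero LIMSEQ_power_zero) simp
  qed
  have eq: "(A *v Z - s *s Z) $ i = - v $ i" for i
  proof (rule LIMSEQ_unique)
    show "(\<lambda>n. (A *v I n - s *s I n) $ i) \<longlonglongrightarrow> (A *v Z - s *s Z) $ i"
      unfolding matrix_vector_mult_def by (simp, intro tendsto_intros I_lim)
    show "(\<lambda>n. (A *v I n - s *s I n) $ i) \<longlonglongrightarrow> - v $ i"
      unfolding I_def mat_exp_laplace_partial[OF of_nat_0_le_iff]
      using tendsto_diff[OF decay[of i] tendsto_const[of "v $ i"]] by simp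
  qed
  have "(s *s Z - A *v Z) $ i = v $ i" for i
    using eq[of i] by (simp; linarith)
  then show ?thesis by (simp add: vec_eq_iff)
qed

lemma eq_mat_exp_mult_nth_if_laplace_eq:
  fixes h :: "real \<Rightarrow> real" and A :: "real^'n^'n"
  assumes cont: "continuous_on {0..} h" and bibo: "h absolutely_integrable_on {0..}"
    and laplace: "\<And>s x. s > c \<Longrightarrow> s *s x - A *v x = v \<Longrightarrow>
        ((\<lambda>t. h t * exp (- s * t)) has_integral x $ i) {0..}"
    and "t \<ge> 0"
  shows "h t = (mat_exp (t *\<^sub>R A) *v v) $ i"
proof -
  define s0 where "s0 = max c (mat_l1_norm A) + 1"
  have s0: "s0 > c" "s0 > mat_l1_norm A" "s0 > 0"
    using mat_l1_norm_nonneg[of A] by (auto simp: s0_def)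
  define g where "g t = (mat_exp (t *\<^sub>R A) *v v) $ i" for t
  have ai_h: "(\<lambda>t. h t * exp (- s * t)) absolutely_integrable_on {0..}" if "s > 0" for s
  proof -
    have "continuous_on {0..} (\<lambda>t. exp (- s * t))" by (intro continuous_intros)
    then have "(\<lambda>t. exp (- s * t) * h t) absolutely_integrable_on {0..}"
      by (rule absolutely_integrable_bounded_continuous_mult[OF bibo, where B = 1]) (use that in auto)
    then show ?thesis by (simp add: mult.commute)
  qed
  have "h t - g t = 0"
  proof (rule laplace_zero_imp_zero[of _ s0, OF _ _ _ \<open>t \<ge> 0\<close>])
    show "continuous_on {0..} (\<lambda>t. h t - g t)"
      unfolding g_def by (intro continuous_intros cont continuous_on_mat_exp_mult_nth)
    show "(\<lambda>t. (h t - g t) * exp (- s0 * t)) absolutely_integrable_on {0..}"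
      using set_integral_diff(1)[OF ai_h[OF s0(3)] absolutely_integrable_mat_exp_laplace[OF s0(2)]]
      by (simp add: g_def left_diff_distrib)
    fix k :: nat
    define s where "s = s0 + real k"
    have s: "s > c" "s > mat_l1_norm A" using s0 by (auto simp: s_def)
    define Z where "Z = (\<chi> j. integral {0..} (\<lambda>t. (mat_exp (t *\<^sub>R A) *v v) $ j * exp (- s * t)))"
    have "((\<lambda>t. h t * exp (- s * t)) has_integral Z $ i) {0..}"
      using laplace[OF s(1) mat_exp_laplace_resolvent[OF s(2)]] by (simp add: Z_def)
    moreover have "((\<lambda>t. g t * exp (- s * t)) has_integral Z $ i) {0..}"
      using absolutely_integrable_mat_exp_laplace[OF s(2), of v i]
      by (simp add: Z_def g_def absolutely_integrable_on_def integrable_integral)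
    ultimately have "((\<lambda>t. h t * exp (- s * t) - g t * exp (- s * t)) has_integral Z $ i - Z $ i) {0..}"
      by (rule has_integral_diff)
    then show "((\<lambda>t. (h t - g t) * exp (- (s0 + real k) * t)) has_integral 0) {0..}"
      by (simp add: s_def left_diff_distrib)
  qed
  then show ?thesis by (simp add: g_def)
qed

section \<open>The realisation theorem\<close>

lemma matrix_inv_solves:
  fixes M :: "'a::field^'n^'n"
  assumes "det M \<noteq> 0"
  shows "M *v (matrix_inv M *v y) = y"
proof -
  have "M ** matrix_inv M = mat 1"
    using assms unfolding invertible_det_nz[symmetric] invertible_def matrix_inv_def
    by (rule someI_ex[THEN conjunct1])
  then show ?thesis by (simp add: matrix_vector_mul_assoc)
qed

lemma mat_of_real_minus_cmat_mult_cvec: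
  "(mat (of_real s) - cmat P) *v cvec x = cvec (s *s x - P *v x)"
  by (simp add: matrix_vector_mult_diff_rdistrib mat_mult_vector cmat_mult_cvec vec_eq_iff)

lemma has_integral_Re_laplace_real:
  assumes "((\<lambda>t. complex_of_real (h t) * exp (- complex_of_real s * complex_of_real t)) has_integral F) S"
  shows "((\<lambda>t. h t * exp (- s * t)) has_integral Re F) S"
  using has_integral_linear[OF assms bounded_linear_Re]
  by (simp add: o_def exp_of_real flip: of_real_mult of_real_minus)

theorem lemma7:
  fixes h :: "real \<Rightarrow> real" and p q :: "real poly"
    and m_ty :: "'m::{finite,wellorder} itself"
  assumes cont: "continuous_on {0..} h"
    and bibo: "h absolutely_integrable_on {0..}"
    and coprime: "coprime p q"
    and strictly_proper: "degree p < degree q"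
    and order: "CARD('m::{finite,wellorder}) = degree q"
    and laplace: "\<And>s. Re s > 0 \<Longrightarrow>
        ((\<lambda>t. complex_of_real (h t) * exp (- s * complex_of_real t)) has_integral ratfun p q s) {0..}"
    and dc_gain: "ratfun p q 0 = 1" "integral {0..} h = 1"
  shows "\<exists>P :: real^'m::{finite,wellorder}^'m::{finite,wellorder}.
           hurwitz P \<and>
           (let eta = - (P *v ones); alpha = (first_unit :: real^'m::{finite,wellorder}) in
             (\<forall>s. poly (map_poly complex_of_real q) s \<noteq> 0 \<and> det (mat s - cmat P) \<noteq> 0 \<longrightarrow>
                  ratfun p q s = (\<Sum>i\<in>UNIV. cvec alpha $ i * (matrix_inv (mat s - cmat P) *v cvec eta) $ i)) \<and>
             (\<forall>t\<ge>0. h t = alpha \<bullet> (mat_exp (t *\<^sub>R P) *v eta)) \<and>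
             (\<forall>t\<ge>0. integral {0..t} h = 1 - alpha \<bullet> (mat_exp (t *\<^sub>R P) *v ones)))"
proof -
  let ?Q = "poly (map_poly complex_of_real q)"
  have "coeff p 0 = coeff q 0"
    using dc_gain(1) by (auto simp: ratfun_def poly_0_coeff_0 coeff_map_poly split: if_splits)
  then obtain P :: "real^'m::{finite,wellorder}^'m::{finite,wellorder}" where
      eig: "\<And>l v. cmat P *v v = l *s v \<Longrightarrow> v \<noteq> 0 \<Longrightarrow> ?Q l = 0"
    and res: "\<And>s x. (mat s - cmat P) *v x = cvec (- (P *v ones)) \<Longrightarrow>
        x $ first_idx * ?Q s = poly (map_poly of_real p) s"
    using state_space_realisation[OF strictly_proper order] by blast
  define eta where "eta = - (P *v ones)"
  have "q \<noteq> 0" using strictly_proper by auto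
  have lhp: "Re l < 0" if "?Q l = 0" for l
    by (rule laplace_ratfun_roots_in_left_half_plane[OF bibo laplace coprime \<open>q \<noteq> 0\<close> that])
  have resolvent: "x $ first_idx = ratfun p q s" if "(mat s - cmat P) *v x = cvec eta" "?Q s \<noteq> 0" for s x
    using res[of s x] that by (simp add: eta_def ratfun_def field_simps)
  have "hurwitz P"
    unfolding hurwitz_def is_eigenvalue_def using eig lhp by blast
  moreover have "ratfun p q s = (\<Sum>i\<in>UNIV. cvec first_unit $ i * (matrix_inv (mat s - cmat P) *v cvec eta) $ i)"
    if "?Q s \<noteq> 0" "det (mat s - cmat P) \<noteq> 0" for s
    using resolvent[OF matrix_inv_solves[OF that(2)] that(1)]
    by (simp add: first_unit_def axis_def if_zero_mult of_real_if_zero)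
  moreover have impulse: "h t = (mat_exp (t *\<^sub>R P) *v eta) $ first_idx" if "t \<ge> 0" for t
  proof (rule eq_mat_exp_mult_nth_if_laplace_eq[OF cont bibo _ that, where c = 0])
    fix s :: real and x assume "s > 0" "s *s x - P *v x = eta"
    then have "(mat (of_real s) - cmat P) *v cvec x = cvec eta"
      by (simp add: mat_of_real_minus_cmat_mult_cvec)
    then have "cvec x $ first_idx = ratfun p q (of_real s)"
      using resolvent lhp[of "of_real s"] \<open>s > 0\<close> by force
    then have "x $ first_idx = Re (ratfun p q (of_real s))"
      by (metis Re_complex_of_real cvec_nth)
    then show "((\<lambda>t. h t * exp (- s * t)) has_integral x $ first_idx) {0..}"
      using has_integral_Re_laplace_real[OF laplace[of "of_real s"]] \<open>s > 0\<close> by simp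
  qed
  moreover have "integral {0..t} h = 1 - (mat_exp (t *\<^sub>R P) *v ones) $ first_idx" if "t \<ge> 0" for t
  proof -
    have "integral {0..t} h = integral {0..t} (\<lambda>\<tau>. - (mat_exp (\<tau> *\<^sub>R P) *v (P *v ones)) $ first_idx)"
      using impulse by (intro integral_cong) (simp add: eta_def matrix_vector_mult_uminus_right)
    also have "\<dots> = - ((mat_exp (t *\<^sub>R P) *v ones) $ first_idx - 1)"
      using integral_mat_exp_mult_nth[OF that, of P ones first_idx] by simp
    finally show ?thesis by simp
  qed
  ultimately show ?thesis
    by (intro exI[of _ P]) (simp add: Let_def eta_def first_unit_def inner_axis')
qed

end
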